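(* Let $X$ take values in a finite set $\mathcal X$ with $\mathbb{P}(X=x)>0$ for all $x$, let $Y\in[M]$, $R\in\{0,1\}$, and let $F$ take values in a finite set $\mathcal F$. Assume $F$ is conditionally independent of $R$ given $(Y,X)$, and $\mathbb{P}(R=1\mid Y=y,X=x)>0$ for all $x,y$. For each $x$ define $\alpha_x(f,y)=\mathbb{P}(R=1,F=f,Y=y\mid X=x)$, $\beta_x(f)=\mathbb{P}(R=0,F=f\mid X=x)$, $A_x=[\alpha_x(f,y)]_{f\in\mathcal F,y\in[M]}$, $\boldsymbol\beta_x=(\beta_x(f))_{f\in\mathcal F}$, $D=\mathrm{diag}(1,2,\dots,M)$, and \[\Pi_x=\Big\{(\pi_x(y))_{y\in[M]}:\ \sum_{y=1}^M\alpha_x(f,y)\Big(\frac1{\pi_x(y)}-1\Big)=\beta_x(f)\ \forall f\in\mathcal F,\ \pi_x(y)\in(0,1]\Big\}.\] Let $\theta_{x,\min}$ and $\theta_{x,\max}$ be the minimum and maximum of $\mathbf 1^\top A_xD(\mathbf w_x+\mathbf 1)$ over $\mathbf w_x\in\mathbb{R}^M$ with $A_x\mathbf w_x=\boldsymbol\beta_x$, $\mathbf w_x\ge\mathbf 0$. Then the set \[\Theta=\Big\{\sum_{x\in\mathcal X}\mathbb{P}(X=x)\sum_{f\in\mathcal F}\sum_{y=1}^M y\,\frac{\alpha_x(f,y)}{\pi_x(y)}:\ (\pi_x)\in\Pi_x\ \forall x\Big\}\] equals $\big[\sum_x\theta_{x,\min}\mathbb{P}(X=x),\ \sum_x\theta_{x,\max}\mathbb{P}(X=x)\big]=:[\theta^{\mathrm{shad}}_{\min},\theta^{\mathrm{shad}}_{\max}]$.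 Moreover, if $A_x$ has full column rank for every $x\in\mathcal X$, then $\theta^{\mathrm{shad}}_{\min}=\theta^{\mathrm{shad}}_{\max}$ (point identification).
   Context: $\Theta$ is the identification set for $\theta=\mathbb{E}[Y]$ when $(X,F,R,RY)$ is observed and missingness may depend on $Y$; $\pi_x(y)$ plays the role of $\mathbb{P}(R=1\mid Y=y,X=x)$. Column vectors $\mathbf 1,\mathbf 0$ are all-ones and all-zeros vectors of appropriate dimension. *)

theory Defs
  imports "HOL-Probability.Probability"
begin

text \<open>Joint law of (X, F, R, Y) as a pmf on tuples (x, f, r, y);
  r = True means R = 1.\<close>

definition PX :: "('x \<times> 'f \<times> bool \<times> nat) pmf \<Rightarrow> 'x \<Rightarrow> real" where
  "PX p x = measure_pmf.prob p {\<omega>. fst \<omega> = x}"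

definition alpha :: "('x \<times> 'f \<times> bool \<times> nat) pmf \<Rightarrow> 'x \<Rightarrow> 'f \<Rightarrow> nat \<Rightarrow> real" where
  "alpha p x f y = measure_pmf.prob p {(x, f, True, y)} / PX p x"

definition beta :: "('x \<times> 'f \<times> bool \<times> nat) pmf \<Rightarrow> 'x \<Rightarrow> 'f \<Rightarrow> real" where
  "beta p x f = measure_pmf.prob p {\<omega>. \<omega> \<in> {x} \<times> {f} \<times> {False} \<times> UNIV} / PX p x"

definition cond_indep_F_R_given_YX :: "('x \<times> 'f \<times> bool \<times> nat) pmf \<Rightarrow> bool" where
  "cond_indep_F_R_given_YX p \<longleftrightarrow> (\<forall>x f r y.
     measure_pmf.prob p {(x, f, r, y)} * measure_pmf.prob p {\<omega>. fst \<omega> = x \<and> snd (snd (snd \<omega>)) = y}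
     = measure_pmf.prob p {\<omega>. fst \<omega> = x \<and> fst (snd \<omega>) = f \<and> snd (snd (snd \<omega>)) = y}
       * measure_pmf.prob p {\<omega>. fst \<omega> = x \<and> fst (snd (snd \<omega>)) = r \<and> snd (snd (snd \<omega>)) = y})"

definition prop_R1 :: "('x \<times> 'f \<times> bool \<times> nat) pmf \<Rightarrow> 'x \<Rightarrow> nat \<Rightarrow> real" where
  "prop_R1 p x y = measure_pmf.prob p {\<omega>. fst \<omega> = x \<and> fst (snd (snd \<omega>)) \<and> snd (snd (snd \<omega>)) = y}
     / measure_pmf.prob p {\<omega>. fst \<omega> = x \<and> snd (snd (snd \<omega>)) = y}"

text \<open>Pi_x: the set of (pi_x(y))_{y in [M]} (functions, only values on {1..M} matter).\<close>
definition Pi_set :: "('x \<times> 'f \<times> bool \<times> nat) pmf \<Rightarrow> 'f set \<Rightarrow> nat \<Rightarrow> 'x \<Rightarrow> (nat \<Rightarrow> real) set" where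
  "Pi_set p FF M x = {\<pi>. (\<forall>f\<in>FF. (\<Sum>y=1..M. alpha p x f y * (1 / \<pi> y - 1)) = beta p x f)
                        \<and> (\<forall>y\<in>{1..M}. 0 < \<pi> y \<and> \<pi> y \<le> 1)}"

definition lp_values :: "('x \<times> 'f \<times> bool \<times> nat) pmf \<Rightarrow> 'f set \<Rightarrow> nat \<Rightarrow> 'x \<Rightarrow> real set" where
  "lp_values p FF M x = {(\<Sum>f\<in>FF. \<Sum>y=1..M. alpha p x f y * real y * (w y + 1)) | w :: nat \<Rightarrow> real.
       (\<forall>f\<in>FF. (\<Sum>y=1..M. alpha p x f y * w y) = beta p x f) \<and> (\<forall>y\<in>{1..M}. 0 \<le> w y)}"

definition theta_min :: "('x \<times> 'f \<times> bool \<times> nat) pmf \<Rightarrow> 'f set \<Rightarrow> nat \<Rightarrow> 'x \<Rightarrow> real" where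
  "theta_min p FF M x = Inf (lp_values p FF M x)"

definition theta_max :: "('x \<times> 'f \<times> bool \<times> nat) pmf \<Rightarrow> 'f set \<Rightarrow> nat \<Rightarrow> 'x \<Rightarrow> real" where
  "theta_max p FF M x = Sup (lp_values p FF M x)"

definition Theta :: "('x \<times> 'f \<times> bool \<times> nat) pmf \<Rightarrow> 'x set \<Rightarrow> 'f set \<Rightarrow> nat \<Rightarrow> real set" where
  "Theta p XX FF M = {(\<Sum>x\<in>XX. PX p x * (\<Sum>f\<in>FF. \<Sum>y=1..M. real y * alpha p x f y / \<pi> x y))
      | \<pi> :: 'x \<Rightarrow> nat \<Rightarrow> real. \<forall>x\<in>XX. \<pi> x \<in> Pi_set p FF M x}"

text \<open>A_x = [alpha_x(f,y)] (rows f in FF, columns y in [M]) has full column rank,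
  i.e. its columns are linearly independent.\<close>
definition full_column_rank :: "('f \<Rightarrow> nat \<Rightarrow> real) \<Rightarrow> 'f set \<Rightarrow> nat \<Rightarrow> bool" where
  "full_column_rank A FF M \<longleftrightarrow> (\<forall>w :: nat \<Rightarrow> real.
      (\<forall>f\<in>FF. (\<Sum>y=1..M. A f y * w y) = 0) \<longrightarrow> (\<forall>y\<in>{1..M}. w y = 0))"

end

theory Submission
  imports Defs
begin

text \<open>Substituting w = 1/\<pi> - 1 turns \<Pi>_x into the feasible set {w \<ge> 0. A_x w = \<beta>_x} of a
  linear program and the stratum-x summand of \<Theta> into its objective, so \<Theta> is the set of
  P(X = x)-weighted sums of points of the value sets of these programs. Each value set is
  nonempty, because by conditional independence the true propensity score lies in \<Pi>_x; it is
  convex, as an affine image of a polyhedron; and it is compact, because every column of A_x has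
  a positive entry, which bounds the feasible w. Hence it is the interval
  [\<theta>_x,min, \<theta>_x,max], and a nonnegatively weighted sum of intervals is the interval of the
  weighted endpoints. Under full column rank A_x w = \<beta>_x has only one solution.\<close>

definition lp_feasible ::
    "('f \<Rightarrow> nat \<Rightarrow> real) \<Rightarrow> ('f \<Rightarrow> real) \<Rightarrow> 'f set \<Rightarrow> nat \<Rightarrow> (nat \<Rightarrow> real) set" where
  "lp_feasible A b FF M = {w. (\<forall>f\<in>FF. (\<Sum>y=1..M. A f y * w y) = b f) \<and> (\<forall>y\<in>{1..M}. 0 \<le> w y)}"

definition lp_objective :: "('f \<Rightarrow> nat \<Rightarrow> real) \<Rightarrow> 'f set \<Rightarrow> nat \<Rightarrow> (nat \<Rightarrow> real) \<Rightarrow> real" where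
  "lp_objective A FF M w = (\<Sum>f\<in>FF. \<Sum>y=1..M. A f y * real y * (w y + 1))"

lemma convex_lp_objective_image:
  "convex (lp_objective A FF M ` lp_feasible A b FF M)"
proof (rule convexI)
  fix u v t s :: real
  assume "u \<in> lp_objective A FF M ` lp_feasible A b FF M"
    and "v \<in> lp_objective A FF M ` lp_feasible A b FF M"
    and ts: "0 \<le> t" "0 \<le> s" "t + s = 1"
  then obtain w1 w2 where w1: "w1 \<in> lp_feasible A b FF M" "u = lp_objective A FF M w1"
    and w2: "w2 \<in> lp_feasible A b FF M" "v = lp_objective A FF M w2" by blast
  define w where "w y = t * w1 y + s * w2 y" for y
  have "(\<Sum>y=1..M. A f y * w y)
      = t * (\<Sum>y=1..M. A f y * w1 y) + s * (\<Sum>y=1..M. A f y * w2 y)" for f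
    by (simp add: w_def sum.distrib sum_distrib_left algebra_simps)
  then have "w \<in> lp_feasible A b FF M"
    using w1(1) w2(1) ts by (auto simp: lp_feasible_def w_def distrib_right[symmetric])
  moreover have "lp_objective A FF M w = t * u + s * v"
  proof -
    have "A f y * real y * (w y + 1)
        = t * (A f y * real y * (w1 y + 1)) + s * (A f y * real y * (w2 y + 1))" for f y
      using ts(3) by (simp add: w_def algebra_simps flip: distrib_right)
    then show ?thesis
      by (simp add: w1(2) w2(2) lp_objective_def sum.distrib sum_distrib_left)
  qed
  ultimately show "t *\<^sub>R u + s *\<^sub>R v \<in> lp_objective A FF M ` lp_feasible A b FF M"
    by (metis image_eqI real_scaleR_def)
qed

lemma closed_lp_feasible: "closed (lp_feasible A b FF M)"
proof -
  have "lp_feasible A b FF M =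
      (\<Inter>f\<in>FF. {w. (\<Sum>y=1..M. A f y * w y) = b f}) \<inter> (\<Inter>y\<in>{1..M}. {w. 0 \<le> w y})"
    unfolding lp_feasible_def by auto
  moreover have "closed {w::nat \<Rightarrow> real. (\<Sum>y=1..M. A f y * w y) = b f}" for f
    by (intro closed_Collect_eq continuous_intros continuous_on_product_coordinates)
  moreover have "closed {w::nat \<Rightarrow> real. 0 \<le> w y}" for y
    by (intro closed_Collect_le continuous_intros continuous_on_product_coordinates)
  ultimately show ?thesis by (simp add: closed_INT closed_Int)
qed

lemma lp_feasible_coordinate_bound:
  assumes "\<forall>f\<in>FF. \<forall>y\<in>{1..M}. 0 \<le> A f y" and "w \<in> lp_feasible A b FF M"
    and "f \<in> FF" and "y \<in> {1..M}"
  shows "A f y * w y \<le> b f"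
proof -
  have "A f y * w y \<le> (\<Sum>y'=1..M. A f y' * w y')"
    using assms by (intro member_le_sum) (auto simp: lp_feasible_def)
  also have "\<dots> = b f" using assms by (simp add: lp_feasible_def)
  finally show ?thesis .
qed

text \<open>Feasible points may be set to 0 outside {1..M} without changing the objective; the
  truncated ones lie in a product of compact intervals.\<close>
lemma compact_lp_objective_image:
  assumes nonneg: "\<forall>f\<in>FF. \<forall>y\<in>{1..M}. 0 \<le> A f y"
    and column_pos: "\<forall>y\<in>{1..M}. \<exists>f\<in>FF. 0 < A f y"
  shows "compact (lp_objective A FF M ` lp_feasible A b FF M)"
proof -
  obtain g where g: "\<forall>y\<in>{1..M}. g y \<in> FF \<and> 0 < A (g y) y"
    using column_pos by metis
  define box where "box = PiE UNIV (\<lambda>y. {0 .. if y \<in> {1..M} then b (g y) / A (g y) y else 0})"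
  have "lp_objective A FF M ` lp_feasible A b FF M
      \<subseteq> lp_objective A FF M ` (lp_feasible A b FF M \<inter> box)"
  proof
    fix v assume "v \<in> lp_objective A FF M ` lp_feasible A b FF M"
    then obtain w where w: "w \<in> lp_feasible A b FF M" "v = lp_objective A FF M w" by blast
    define w' where "w' y = (if y \<in> {1..M} then w y else 0)" for y
    have same_sums: "(\<Sum>y=1..M. h y (w' y)) = (\<Sum>y=1..M. h y (w y))"
      for h :: "nat \<Rightarrow> real \<Rightarrow> real"
      by (rule sum.cong) (auto simp: w'_def)
    have "w' \<in> lp_feasible A b FF M" "lp_objective A FF M w' = v"
      using w by (auto simp: lp_feasible_def lp_objective_def same_sums w'_def)
    moreover have "w' \<in> box"
      using w(1) g lp_feasible_coordinate_bound[OF nonneg w(1)]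
      by (auto simp: box_def w'_def lp_feasible_def pos_le_divide_eq mult.commute)
    ultimately show "v \<in> lp_objective A FF M ` (lp_feasible A b FF M \<inter> box)" by blast
  qed
  then have image_eq: "lp_objective A FF M ` lp_feasible A b FF M
      = lp_objective A FF M ` (lp_feasible A b FF M \<inter> box)"
    by blast
  have "compactin (product_topology (\<lambda>_. euclidean) UNIV) box"
    unfolding box_def by (subst compactin_PiE) (auto simp: compactin_euclidean_iff)
  then have "compact box"
    by (simp add: euclidean_product_topology compactin_euclidean_iff)
  then have "compact (lp_feasible A b FF M \<inter> box)"
    by (intro closed_Int_compact closed_lp_feasible)
  moreover have "continuous_on UNIV (lp_objective A FF M)"
    unfolding lp_objective_def by (intro continuous_intros continuous_on_product_coordinates)
  ultimately show ?thesis
    unfolding image_eq by (metis compact_continuous_image continuous_on_subset top_greatest)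
qed

lemma compact_convex_real_eq_Icc:
  fixes S :: "real set"
  assumes "compact S" and "convex S" and "S \<noteq> {}"
  shows "S = {Inf S .. Sup S}"
proof -
  obtain a b where "S = {a..b}"
    using assms connected_compact_interval_1 connected_convex_1 by metis
  with assms(3) show ?thesis by simp
qed

lemma lp_objective_unique_if_full_column_rank:
  assumes "full_column_rank A FF M"
    and "w1 \<in> lp_feasible A b FF M" and "w2 \<in> lp_feasible A b FF M"
  shows "lp_objective A FF M w1 = lp_objective A FF M w2"
proof -
  have "\<forall>f\<in>FF. (\<Sum>y=1..M. A f y * (w1 y - w2 y)) = 0"
    using assms(2,3) by (simp add: lp_feasible_def right_diff_distrib sum_subtractf)
  moreover have "(\<forall>f\<in>FF. (\<Sum>y=1..M. A f y * (w1 y - w2 y)) = 0)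
      \<longrightarrow> (\<forall>y\<in>{1..M}. w1 y - w2 y = 0)"
    using assms(1) unfolding full_column_rank_def by (rule spec)
  ultimately have "\<forall>y\<in>{1..M}. w1 y = w2 y" by simp
  then show ?thesis unfolding lp_objective_def by (intro sum.cong) auto
qed

lemma lp_objective_reciprocal:
  "lp_objective A FF M (\<lambda>y. 1 / \<pi> y - 1) = (\<Sum>f\<in>FF. \<Sum>y=1..M. real y * A f y / \<pi> y)"
  unfolding lp_objective_def by (intro sum.cong refl) (simp add: field_simps)

lemma weighted_sum_of_intervals:
  fixes c lo hi :: "'a \<Rightarrow> real"
  assumes c: "\<forall>x\<in>X. 0 \<le> c x" and lo_hi: "\<forall>x\<in>X. lo x \<le> hi x"
  shows "{(\<Sum>x\<in>X. c x * g x) | g. \<forall>x\<in>X. g x \<in> {lo x .. hi x}}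
           = {(\<Sum>x\<in>X. c x * lo x) .. (\<Sum>x\<in>X. c x * hi x)}"
    (is "?S = {?A .. ?B}")
proof
  show "?S \<subseteq> {?A .. ?B}"
  proof
    fix v assume "v \<in> ?S"
    then obtain g where v: "v = (\<Sum>x\<in>X. c x * g x)" and g: "\<forall>x\<in>X. g x \<in> {lo x .. hi x}"
      by blast
    have "?A \<le> v" "v \<le> ?B"
      unfolding v using c g by (auto intro!: sum_mono mult_left_mono)
    then show "v \<in> {?A .. ?B}" by simp
  qed
  show "{?A .. ?B} \<subseteq> ?S"
  proof
    fix v assume v: "v \<in> {?A .. ?B}"
    then have "v \<in> closed_segment ?A ?B" by (simp add: closed_segment_eq_real_ivl)
    then obtain t where t: "0 \<le> t" "t \<le> 1" and v_eq: "v = (1 - t) * ?A + t * ?B"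
      unfolding closed_segment_def by auto
    define g where "g x = (1 - t) * lo x + t * hi x" for x
    have "\<forall>x\<in>X. g x \<in> {lo x .. hi x}"
    proof
      fix x assume "x \<in> X"
      have "(1 - t) * lo x + t * lo x \<le> g x" "g x \<le> (1 - t) * hi x + t * hi x"
        unfolding g_def using lo_hi \<open>x \<in> X\<close> t by (intro add_mono mult_left_mono; simp)+
      then show "g x \<in> {lo x .. hi x}" by (simp add: algebra_simps)
    qed
    moreover have "(\<Sum>x\<in>X. c x * g x) = (1 - t) * ?A + t * ?B"
    proof -
      have "c x * g x = (1 - t) * (c x * lo x) + t * (c x * hi x)" for x
        by (simp add: g_def algebra_simps)
      then show ?thesis by (simp add: sum.distrib sum_distrib_left)
    qed
    ultimately show "v \<in> ?S" unfolding v_eq by force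
  qed
qed

lemma sum_choice_eq_sum_image:
  "{(\<Sum>x\<in>X. c x * h x (\<pi> x)) | \<pi>. \<forall>x\<in>X. \<pi> x \<in> P x}
     = {(\<Sum>x\<in>X. c x * g x) | g. \<forall>x\<in>X. g x \<in> h x ` P x}"
proof
  show "{(\<Sum>x\<in>X. c x * g x) | g. \<forall>x\<in>X. g x \<in> h x ` P x}
          \<subseteq> {(\<Sum>x\<in>X. c x * h x (\<pi> x)) | \<pi>. \<forall>x\<in>X. \<pi> x \<in> P x}"
  proof clarify
    fix g assume "\<forall>x\<in>X. g x \<in> h x ` P x"
    then have "\<forall>x\<in>X. \<exists>q. q \<in> P x \<and> g x = h x q" by blast
    then obtain \<pi> where "\<forall>x\<in>X. \<pi> x \<in> P x \<and> g x = h x (\<pi> x)"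
      by (rule bchoice[elim_format]) blast
    then show "\<exists>\<pi>. (\<Sum>x\<in>X. c x * g x) = (\<Sum>x\<in>X. c x * h x (\<pi> x)) \<and> (\<forall>x\<in>X. \<pi> x \<in> P x)"
      by (intro exI[of _ \<pi>]) (simp cong: sum.cong)
  qed
  show "{(\<Sum>x\<in>X. c x * h x (\<pi> x)) | \<pi>. \<forall>x\<in>X. \<pi> x \<in> P x}
          \<subseteq> {(\<Sum>x\<in>X. c x * g x) | g. \<forall>x\<in>X. g x \<in> h x ` P x}"
  proof clarify
    fix \<pi> assume "\<forall>x\<in>X. \<pi> x \<in> P x"
    then show "\<exists>g. (\<Sum>x\<in>X. c x * h x (\<pi> x)) = (\<Sum>x\<in>X. c x * g x) \<and> (\<forall>x\<in>X. g x \<in> h x ` P x)"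
      by (intro exI[of _ "\<lambda>x. h x (\<pi> x)"]) blast
  qed
qed

lemma lp_values_eq_image:
  "lp_values p FF M x = lp_objective (alpha p x) FF M ` lp_feasible (alpha p x) (beta p x) FF M"
  unfolding lp_values_def lp_objective_def lp_feasible_def by blast

lemma Pi_set_imp_lp_feasible:
  assumes "\<pi> \<in> Pi_set p FF M x"
  shows "(\<lambda>y. 1 / \<pi> y - 1) \<in> lp_feasible (alpha p x) (beta p x) FF M"
proof -
  have "0 \<le> 1 / \<pi> y - 1" if "y \<in> {1..M}" for y
    using assms that unfolding Pi_set_def by simp
  with assms show ?thesis unfolding Pi_set_def lp_feasible_def by blast
qed

lemma lp_feasible_imp_Pi_set:
  assumes "w \<in> lp_feasible (alpha p x) (beta p x) FF M"
  shows "(\<lambda>y. 1 / (w y + 1)) \<in> Pi_set p FF M x"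
proof -
  have "0 < 1 / (w y + 1) \<and> 1 / (w y + 1) \<le> 1" if "y \<in> {1..M}" for y
  proof -
    have "0 \<le> w y" using assms that unfolding lp_feasible_def by blast
    then show ?thesis by (simp add: divide_le_eq_1)
  qed
  moreover have "1 / (1 / (w y + 1)) - 1 = w y" for y
    by simp
  ultimately show ?thesis using assms unfolding Pi_set_def lp_feasible_def by simp
qed

lemma lp_values_eq_image_Pi_set:
  "lp_values p FF M x = (\<lambda>\<pi>. \<Sum>f\<in>FF. \<Sum>y=1..M. real y * alpha p x f y / \<pi> y) ` Pi_set p FF M x"
  unfolding lp_values_eq_image
proof (intro equalityI image_subsetI)
  fix w assume "w \<in> lp_feasible (alpha p x) (beta p x) FF M"
  then have "(\<lambda>y. 1 / (w y + 1)) \<in> Pi_set p FF M x"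
    by (rule lp_feasible_imp_Pi_set)
  moreover have "lp_objective (alpha p x) FF M w
      = (\<lambda>\<pi>. \<Sum>f\<in>FF. \<Sum>y=1..M. real y * alpha p x f y / \<pi> y) (\<lambda>y. 1 / (w y + 1))"
    unfolding lp_objective_reciprocal[symmetric] by simp
  ultimately show "lp_objective (alpha p x) FF M w
      \<in> (\<lambda>\<pi>. \<Sum>f\<in>FF. \<Sum>y=1..M. real y * alpha p x f y / \<pi> y) ` Pi_set p FF M x"
    by (simp only: image_eqI)
next
  fix \<pi> assume "\<pi> \<in> Pi_set p FF M x"
  then have "(\<lambda>y. 1 / \<pi> y - 1) \<in> lp_feasible (alpha p x) (beta p x) FF M"
    by (rule Pi_set_imp_lp_feasible)
  then show "(\<Sum>f\<in>FF. \<Sum>y=1..M. real y * alpha p x f y / \<pi> y)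
      \<in> lp_objective (alpha p x) FF M ` lp_feasible (alpha p x) (beta p x) FF M"
    unfolding lp_objective_reciprocal[symmetric] by blast
qed

lemma alpha_nonneg: "0 \<le> alpha p x f y"
  unfolding alpha_def PX_def by simp

lemma prop_R1_le_1: "prop_R1 p x y \<le> 1"
proof -
  have "measure_pmf.prob p {\<omega>. fst \<omega> = x \<and> fst (snd (snd \<omega>)) \<and> snd (snd (snd \<omega>)) = y}
      \<le> measure_pmf.prob p {\<omega>. fst \<omega> = x \<and> snd (snd (snd \<omega>)) = y}"
    by (rule measure_pmf.finite_measure_mono) auto
  then show ?thesis
    unfolding prop_R1_def using measure_nonneg by (smt (verit) divide_le_eq_1)
qed

lemma alpha_column_pos:
  assumes "set_pmf p \<subseteq> XX \<times> FF \<times> UNIV \<times> {1..M}" and "PX p x > 0" and "prop_R1 p x y > 0"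
  shows "\<exists>f\<in>FF. 0 < alpha p x f y"
proof -
  have "measure_pmf.prob p {\<omega>. fst \<omega> = x \<and> fst (snd (snd \<omega>)) \<and> snd (snd (snd \<omega>)) = y} \<noteq> 0"
    using assms(3) unfolding prop_R1_def by auto
  then obtain f where f: "(x, f, True, y) \<in> set_pmf p"
    using measure_pmf_zero_iff by fastforce
  then have "f \<in> FF" using assms(1) by auto
  moreover have "0 < alpha p x f y"
    using f assms(2) by (simp add: alpha_def measure_pmf_single pmf_positive)
  ultimately show ?thesis ..
qed

lemma alpha_mult_odds_eq:
  assumes "cond_indep_F_R_given_YX p" and "prop_R1 p x y > 0"
  shows "alpha p x f y * (1 / prop_R1 p x y - 1) = pmf p (x, f, False, y) / PX p x"
proof -
  define N where "N = measure_pmf.prob p {\<omega>. fst \<omega> = x \<and> snd (snd (snd \<omega>)) = y}"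
  define N1 where
    "N1 = measure_pmf.prob p {\<omega>. fst \<omega> = x \<and> fst (snd (snd \<omega>)) \<and> snd (snd (snd \<omega>)) = y}"
  define Nf where
    "Nf = measure_pmf.prob p {\<omega>. fst \<omega> = x \<and> fst (snd \<omega>) = f \<and> snd (snd (snd \<omega>)) = y}"
  have prop_eq: "prop_R1 p x y = N1 / N"
    unfolding prop_R1_def N1_def N_def ..
  have "N1 \<noteq> 0"
    using assms(2) unfolding prop_eq by auto
  have indep: "pmf p (x, f, True, y) * N = Nf * N1"
    using assms(1) unfolding cond_indep_F_R_given_YX_def N_def Nf_def N1_def
    by (auto simp: measure_pmf_single dest: spec[of _ x] spec[of _ f] spec[of _ True] spec[of _ y])
  have "{\<omega>. fst \<omega> = x \<and> fst (snd \<omega>) = f \<and> snd (snd (snd \<omega>)) = y}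
      = {(x, f, True, y), (x, f, False, y)}"
    by auto
  then have Nf_split: "Nf = pmf p (x, f, True, y) + pmf p (x, f, False, y)"
    unfolding Nf_def by (simp add: measure_measure_pmf_finite)
  have "alpha p x f y * (1 / prop_R1 p x y - 1)
      = (pmf p (x, f, True, y) * N / N1 - pmf p (x, f, True, y)) / PX p x"
    unfolding alpha_def prop_eq by (simp add: measure_pmf_single field_simps)
  also have "\<dots> = (Nf - pmf p (x, f, True, y)) / PX p x"
    using indep \<open>N1 \<noteq> 0\<close> by simp
  also have "\<dots> = pmf p (x, f, False, y) / PX p x"
    unfolding Nf_split by simp
  finally show ?thesis .
qed

lemma beta_eq_sum_pmf:
  assumes "set_pmf p \<subseteq> XX \<times> FF \<times> UNIV \<times> {1..M}"
  shows "beta p x f = (\<Sum>y=1..M. pmf p (x, f, False, y)) / PX p x"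
proof -
  have "{\<omega>. \<omega> \<in> {x} \<times> {f} \<times> {False} \<times> UNIV} \<inter> set_pmf p
      = (\<lambda>y. (x, f, False, y)) ` {1..M} \<inter> set_pmf p"
    using assms by auto
  then have "measure_pmf.prob p {\<omega>. \<omega> \<in> {x} \<times> {f} \<times> {False} \<times> UNIV}
      = measure_pmf.prob p ((\<lambda>y. (x, f, False, y)) ` {1..M})"
    by (metis measure_Int_set_pmf)
  also have "\<dots> = (\<Sum>y=1..M. pmf p (x, f, False, y))"
    by (subst measure_measure_pmf_finite) (auto simp: sum.reindex inj_on_def)
  finally show ?thesis unfolding beta_def by simp
qed

lemma prop_R1_in_Pi_set:
  assumes "set_pmf p \<subseteq> XX \<times> FF \<times> UNIV \<times> {1..M}" and "cond_indep_F_R_given_YX p"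
    and "\<forall>y\<in>{1..M}. prop_R1 p x y > 0"
  shows "prop_R1 p x \<in> Pi_set p FF M x"
proof -
  have "(\<Sum>y=1..M. alpha p x f y * (1 / prop_R1 p x y - 1)) = beta p x f" for f
  proof -
    have "(\<Sum>y=1..M. alpha p x f y * (1 / prop_R1 p x y - 1))
        = (\<Sum>y=1..M. pmf p (x, f, False, y) / PX p x)"
      using assms(2,3) by (intro sum.cong refl alpha_mult_odds_eq) auto
    then show ?thesis by (simp add: beta_eq_sum_pmf[OF assms(1)] sum_divide_distrib)
  qed
  then show ?thesis
    using assms(3) unfolding Pi_set_def by (simp add: prop_R1_le_1)
qed

lemma lp_values_eq_theta_interval:
  assumes "set_pmf p \<subseteq> XX \<times> FF \<times> UNIV \<times> {1..M}" and "PX p x > 0"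
    and "cond_indep_F_R_given_YX p" and "\<forall>y\<in>{1..M}. prop_R1 p x y > 0"
  shows "lp_values p FF M x = {theta_min p FF M x .. theta_max p FF M x}"
    and "theta_min p FF M x \<le> theta_max p FF M x"
proof -
  have "lp_values p FF M x \<noteq> {}"
    using prop_R1_in_Pi_set[OF assms(1,3,4)] unfolding lp_values_eq_image_Pi_set by blast
  moreover have "compact (lp_values p FF M x)"
    unfolding lp_values_eq_image
    using alpha_column_pos[OF assms(1,2)] assms(4)
    by (intro compact_lp_objective_image) (auto simp: alpha_nonneg)
  ultimately have "lp_values p FF M x = {Inf (lp_values p FF M x) .. Sup (lp_values p FF M x)}"
    by (intro compact_convex_real_eq_Icc) (simp_all add: lp_values_eq_image convex_lp_objective_image)
  with \<open>lp_values p FF M x \<noteq> {}\<close>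
  show "lp_values p FF M x = {theta_min p FF M x .. theta_max p FF M x}"
    and "theta_min p FF M x \<le> theta_max p FF M x"
    unfolding theta_min_def theta_max_def by (metis atLeastAtMost_iff equals0I order_trans)+
qed

lemma Theta_eq_weighted_lp_values:
  "Theta p XX FF M = {(\<Sum>x\<in>XX. PX p x * g x) | g. \<forall>x\<in>XX. g x \<in> lp_values p FF M x}"
  unfolding Theta_def lp_values_eq_image_Pi_set
  using sum_choice_eq_sum_image[where c = "PX p" and P = "Pi_set p FF M" and X = XX
      and h = "\<lambda>x \<pi>. \<Sum>f\<in>FF. \<Sum>y=1..M. real y * alpha p x f y / \<pi> y"]
  by simp

theorem proposition4:
  fixes p :: "('x \<times> 'f \<times> bool \<times> nat) pmf"
    and XX :: "'x set" and FF :: "'f set" and M :: nat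
  assumes "finite XX" and "finite FF" and "0 < M"
    and "set_pmf p \<subseteq> XX \<times> FF \<times> UNIV \<times> {1..M}"
    and "\<forall>x\<in>XX. PX p x > 0"
    and "cond_indep_F_R_given_YX p"
    and "\<forall>x\<in>XX. \<forall>y\<in>{1..M}. prop_R1 p x y > 0"
  shows "Theta p XX FF M =
           {(\<Sum>x\<in>XX. theta_min p FF M x * PX p x) .. (\<Sum>x\<in>XX. theta_max p FF M x * PX p x)}
     \<and> ((\<forall>x\<in>XX. full_column_rank (alpha p x) FF M) \<longrightarrow>
           (\<Sum>x\<in>XX. theta_min p FF M x * PX p x) = (\<Sum>x\<in>XX. theta_max p FF M x * PX p x))"
proof
  let ?lo = "theta_min p FF M" and ?hi = "theta_max p FF M"
  have value_sets: "\<forall>x\<in>XX. lp_values p FF M x = {?lo x .. ?hi x}"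
    and lo_hi: "\<forall>x\<in>XX. ?lo x \<le> ?hi x"
    using lp_values_eq_theta_interval[OF assms(4) _ assms(6)] assms(5,7) by auto
  have "Theta p XX FF M = {(\<Sum>x\<in>XX. PX p x * g x) | g. \<forall>x\<in>XX. g x \<in> {?lo x .. ?hi x}}"
    unfolding Theta_eq_weighted_lp_values using value_sets by auto
  also have "\<dots> = {(\<Sum>x\<in>XX. PX p x * ?lo x) .. (\<Sum>x\<in>XX. PX p x * ?hi x)}"
    using assms(5) lo_hi by (intro weighted_sum_of_intervals) auto
  finally show "Theta p XX FF M = {(\<Sum>x\<in>XX. ?lo x * PX p x) .. (\<Sum>x\<in>XX. ?hi x * PX p x)}"
    by (simp add: mult.commute)
  show "(\<forall>x\<in>XX. full_column_rank (alpha p x) FF M) \<longrightarrow>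
      (\<Sum>x\<in>XX. ?lo x * PX p x) = (\<Sum>x\<in>XX. ?hi x * PX p x)"
  proof (intro impI sum.cong refl)
    fix x assume "\<forall>x\<in>XX. full_column_rank (alpha p x) FF M" and "x \<in> XX"
    moreover have "?lo x \<in> lp_values p FF M x" "?hi x \<in> lp_values p FF M x"
      using value_sets lo_hi \<open>x \<in> XX\<close> by auto
    ultimately have "?lo x = ?hi x"
      unfolding lp_values_eq_image by (auto intro!: lp_objective_unique_if_full_column_rank)
    then show "?lo x * PX p x = ?hi x * PX p x" by simp
  qed
qed

end
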